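(* Under the hypotheses and notation of the context (including $\beta=4\eta(E)/t$ and the assumption $\sum_{e\in E:\,i\in\rho(e)}\eta(e)\le\beta$ for every $i$ with $|W_i|>1$), for every edge $f=f_{ij}\in F$ let $\psi(f)=\omega(i,j)/w(\sigma(i,j))$ and $\phi(f)=\max(\psi(f),\mathrm{st}_T(f))$. Then for every $i$ with $|W_i|>1$, \[ \sum_{f\in F:\ i\in\rho(f)}\phi(f)\le2\beta. \]
   Context: Weighted edges $w[u,v]$ ($u\ne v$, $w>0$) on a vertex set $V$; $w(e)$ is the weight of $e$; $T$ is a spanning tree on $V$ with positive weights; $t>1$ is an integer. Resistance of an edge is $1/w$, of a path the sum over its edges; for $e=w[u,v]$, $T(e)$ is the path in $T$ from $u$ to $v$, $\mathrm{st}_T(e)=w\cdot\mathrm{res}(T(e))$, $\eta(e)=\max(\mathrm{st}_T(e),1)$, $\eta(E)=\sum_{e\in E}\eta(e)$. A $(T,E)$-decomposition: sets $W_1,\dots,W_h$ covering $V$, each inducing a subtree of $T$ (possibly a single vertex), pairwise intersecting in at most one vertex, with $\rho$ assigning to each edge $(u,v)\in E$ either $\{i\}$ with $u,v\in W_i$ or $\{i,j\}$ ($i\ne j$) with one endpoint in $W_i$ and the other in $W_j$. For $i\ne j$, $\sigma(i,j)$ is the edge $e\in E$ with $\rho(e)=\{i,j\}$ maximizing $w(e)/\eta(e)$ (ties broken by a fixed order), undefined if none exists. $F$ is the set of edges $f_{ij}$, one for each unordered pair $\{i,j\}$ ($i\ne j$) with $\sigma(i,j)$ defined, where $f_{ij}$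 has the endpoints of $\sigma(i,j)$ and weight $\omega(i,j)=\sum_{e\in E:\rho(e)=\{i,j\}}w(e)$; $\rho(f_{ij})=\{i,j\}$. *)

theory Defs
  imports Complex_Main
begin

definition is_simple_tpath :: "'v set set \<Rightarrow> 'v \<Rightarrow> 'v \<Rightarrow> 'v list \<Rightarrow> bool" where
  "is_simple_tpath T u v xs \<longleftrightarrow> xs \<noteq> [] \<and> hd xs = u \<and> last xs = v \<and> distinct xs \<and>
     (\<forall>k. Suc k < length xs \<longrightarrow> {xs ! k, xs ! Suc k} \<in> T)"

definition spanning_tree :: "'v set \<Rightarrow> 'v set set \<Rightarrow> ('v set \<Rightarrow> real) \<Rightarrow> bool" where
  "spanning_tree V T tw \<longleftrightarrow>
     T \<subseteq> {{a, b} | a b. a \<in> V \<and> b \<in> V \<and> a \<noteq> b} \<and>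
     (\<forall>e\<in>T. tw e > 0) \<and>
     (\<forall>u\<in>V. \<forall>v\<in>V. \<exists>!xs. is_simple_tpath T u v xs)"

definition tree_path :: "'v set set \<Rightarrow> 'v \<Rightarrow> 'v \<Rightarrow> 'v list" where
  "tree_path T u v = (THE xs. is_simple_tpath T u v xs)"

definition path_res :: "('v set \<Rightarrow> real) \<Rightarrow> 'v list \<Rightarrow> real" where
  "path_res tw xs = (\<Sum>k<length xs - 1. 1 / tw {xs ! k, xs ! Suc k})"

definition stretch :: "'v set set \<Rightarrow> ('v set \<Rightarrow> real) \<Rightarrow> 'v \<Rightarrow> 'v \<Rightarrow> real \<Rightarrow> real" where
  "stretch T tw u v c = c * path_res tw (tree_path T u v)"

text \<open>Edges are elements of an abstract type 'e (so parallel edges are allowed),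
with endpoints ends e = (u,v) and weight w e.\<close>
definition eta :: "'v set set \<Rightarrow> ('v set \<Rightarrow> real) \<Rightarrow> ('e \<Rightarrow> 'v \<times> 'v) \<Rightarrow> ('e \<Rightarrow> real) \<Rightarrow> 'e \<Rightarrow> real" where
  "eta T tw ends w e = max (stretch T tw (fst (ends e)) (snd (ends e)) (w e)) 1"

definition TE_decomposition ::
  "'v set \<Rightarrow> 'v set set \<Rightarrow> 'e set \<Rightarrow> ('e \<Rightarrow> 'v \<times> 'v) \<Rightarrow> nat \<Rightarrow> (nat \<Rightarrow> 'v set) \<Rightarrow> ('e \<Rightarrow> nat set) \<Rightarrow> bool" where
  "TE_decomposition V T E ends h W \<rho> \<longleftrightarrow>
     (\<Union>i\<in>{1..h}. W i) = V \<and>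
     (\<forall>i\<in>{1..h}. W i \<noteq> {} \<and> W i \<subseteq> V \<and>
        (\<forall>u\<in>W i. \<forall>v\<in>W i. set (tree_path T u v) \<subseteq> W i)) \<and>
     (\<forall>i\<in>{1..h}. \<forall>j\<in>{1..h}. i \<noteq> j \<longrightarrow> card (W i \<inter> W j) \<le> 1) \<and>
     (\<forall>e\<in>E. (\<exists>i\<in>{1..h}. \<rho> e = {i} \<and> fst (ends e) \<in> W i \<and> snd (ends e) \<in> W i) \<or>
             (\<exists>i\<in>{1..h}. \<exists>j\<in>{1..h}. i \<noteq> j \<and> \<rho> e = {i, j} \<and>
                 fst (ends e) \<in> W i \<and> snd (ends e) \<in> W j))"

text \<open>Index pairs {i,j} (i \<noteq> j) for which sigma(i,j), hence f_ij, is defined.\<close>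
definition F_pairs :: "'e set \<Rightarrow> ('e \<Rightarrow> nat set) \<Rightarrow> nat set set" where
  "F_pairs E \<rho> = {p. \<exists>i j. i \<noteq> j \<and> p = {i, j} \<and> (\<exists>e\<in>E. \<rho> e = p)}"

definition omega :: "'e set \<Rightarrow> ('e \<Rightarrow> real) \<Rightarrow> ('e \<Rightarrow> nat set) \<Rightarrow> nat set \<Rightarrow> real" where
  "omega E w \<rho> p = (\<Sum>e\<in>{e\<in>E. \<rho> e = p}. w e)"

end

theory Submission
  imports Defs
begin

text \<open>For the class of edges e with \<open>\<rho> e = {i, j}\<close>, both \<open>\<psi>(f\<^sub>i\<^sub>j)\<close> and
  \<open>st\<^sub>T(f\<^sub>i\<^sub>j)\<close> are at most \<open>\<omega>(i,j) \<eta>(\<sigma>) / w(\<sigma>)\<close>, and since \<open>\<sigma>\<close> maximises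
  \<open>w/\<eta>\<close> on the class this is at most the total \<open>\<eta>\<close> of the class.  The classes of
  pairs containing i are disjoint and consist of edges e with \<open>i \<in> \<rho> e\<close>, so summing
  gives the bound \<open>\<beta>\<close>, even without the factor 2.\<close>

lemma sum_div_max_ratio_le:
  fixes w \<eta> :: "'e \<Rightarrow> real"
  assumes "finite S" "s \<in> S" "w s > 0"
    and \<eta>_pos: "\<forall>e\<in>S. \<eta> e > 0"
    and max_ratio: "\<forall>e\<in>S. w e / \<eta> e \<le> w s / \<eta> s"
  shows "(\<Sum>e\<in>S. w e) / w s * \<eta> s \<le> (\<Sum>e\<in>S. \<eta> e)"
proof -
  have "\<eta> s > 0" using \<eta>_pos \<open>s \<in> S\<close> by blast
  have "(\<Sum>e\<in>S. w e) \<le> (\<Sum>e\<in>S. w s / \<eta> s * \<eta> e)"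
  proof (rule sum_mono)
    fix e assume "e \<in> S"
    then show "w e \<le> w s / \<eta> s * \<eta> e"
      using \<eta>_pos max_ratio by (simp add: divide_le_eq)
  qed
  also have "\<dots> = w s / \<eta> s * (\<Sum>e\<in>S. \<eta> e)"
    by (simp add: sum_distrib_left)
  finally show ?thesis
    using \<open>w s > 0\<close> \<open>\<eta> s > 0\<close> by (simp add: field_simps)
qed

lemma eta_ge_one: "eta T tw ends w e \<ge> 1"
  unfolding eta_def by simp

lemma finite_F_pairs: "finite E \<Longrightarrow> finite (F_pairs E \<rho>)"
  by (rule finite_subset[of _ "\<rho> ` E"]) (auto simp: F_pairs_def)

lemma contracted_edge_phi_le_class_eta:
  assumes "finite E" and w_pos: "\<forall>e\<in>E. w e > 0"
    and "\<sigma> \<in> E" "\<rho> \<sigma> = p"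
    and max_ratio: "\<forall>e\<in>E. \<rho> e = p \<longrightarrow>
      w e / eta T tw ends w e \<le> w \<sigma> / eta T tw ends w \<sigma>"
  shows "max (omega E w \<rho> p / w \<sigma>) (stretch T tw (fst (ends \<sigma>)) (snd (ends \<sigma>)) (omega E w \<rho> p))
    \<le> (\<Sum>e\<in>{e\<in>E. \<rho> e = p}. eta T tw ends w e)"
proof -
  let ?\<eta> = "eta T tw ends w" and ?\<omega> = "omega E w \<rho> p"
    and ?r = "path_res tw (tree_path T (fst (ends \<sigma>)) (snd (ends \<sigma>)))"
  have "w \<sigma> > 0" using w_pos \<open>\<sigma> \<in> E\<close> by blast
  have "?\<omega> \<ge> 0"
    unfolding omega_def using w_pos by (auto intro: sum_nonneg less_imp_le)
  then have \<psi>_nonneg: "?\<omega> / w \<sigma> \<ge> 0" using \<open>w \<sigma> > 0\<close> by simp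
  have scaled_\<psi>_le: "?\<omega> / w \<sigma> * ?\<eta> \<sigma> \<le> (\<Sum>e\<in>{e\<in>E. \<rho> e = p}. ?\<eta> e)"
    unfolding omega_def
  proof (rule sum_div_max_ratio_le)
    show "\<forall>e\<in>{e\<in>E. \<rho> e = p}. ?\<eta> e > 0"
      using eta_ge_one by (meson less_le_trans zero_less_one)
  qed (use assms \<open>w \<sigma> > 0\<close> in auto)
  have \<psi>_le: "?\<omega> / w \<sigma> \<le> ?\<omega> / w \<sigma> * ?\<eta> \<sigma>"
    using mult_left_mono[OF eta_ge_one \<psi>_nonneg] by simp
  have "?\<omega> * ?r = ?\<omega> / w \<sigma> * (w \<sigma> * ?r)"
    using \<open>w \<sigma> > 0\<close> by simp
  also have "\<dots> \<le> ?\<omega> / w \<sigma> * ?\<eta> \<sigma>"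
    using \<psi>_nonneg by (intro mult_left_mono) (simp_all add: eta_def stretch_def)
  finally have st_le: "?\<omega> * ?r \<le> ?\<omega> / w \<sigma> * ?\<eta> \<sigma>" .
  show ?thesis
    using \<psi>_le st_le scaled_\<psi>_le unfolding stretch_def by simp
qed

lemma sum_classes_containing_le:
  fixes g :: "'e \<Rightarrow> real" and \<rho> :: "'e \<Rightarrow> 'a set"
  assumes "finite E" "finite P" and g_nonneg: "\<forall>e\<in>E. g e \<ge> 0"
  shows "(\<Sum>p\<in>{p\<in>P. i \<in> p}. \<Sum>e\<in>{e\<in>E. \<rho> e = p}. g e) \<le> (\<Sum>e\<in>{e\<in>E. i \<in> \<rho> e}. g e)"
proof -
  let ?P = "{p\<in>P. i \<in> p}"
  have "(\<Sum>p\<in>?P. \<Sum>e\<in>{e\<in>E. \<rho> e = p}. g e) = (\<Sum>p\<in>?P. \<Sum>e\<in>{e\<in>{e\<in>E. \<rho> e \<in> ?P}. \<rho> e = p}. g e)"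
    by (intro sum.cong) auto
  also have "\<dots> = (\<Sum>e\<in>{e\<in>E. \<rho> e \<in> ?P}. g e)"
    using sum.group[of "{e\<in>E. \<rho> e \<in> ?P}" ?P \<rho> g] assms by auto
  also have "\<dots> \<le> (\<Sum>e\<in>{e\<in>E. i \<in> \<rho> e}. g e)"
    using assms by (intro sum_mono2) auto
  finally show ?thesis .
qed

theorem lemma10p3:
  fixes V :: "'v set" and T :: "'v set set" and tw :: "'v set \<Rightarrow> real"
    and E :: "'e set" and ends :: "'e \<Rightarrow> 'v \<times> 'v" and w :: "'e \<Rightarrow> real"
    and t :: nat and h :: nat and W :: "nat \<Rightarrow> 'v set" and \<rho> :: "'e \<Rightarrow> nat set"
    and \<sigma> :: "nat set \<Rightarrow> 'e" and \<beta> :: real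
  assumes finV: "finite V" and finE: "finite E"
    and edges: "\<forall>e\<in>E. fst (ends e) \<in> V \<and> snd (ends e) \<in> V \<and> fst (ends e) \<noteq> snd (ends e) \<and> w e > 0"
    and tree: "spanning_tree V T tw"
    and t_gt: "t > 1"
    and dec: "TE_decomposition V T E ends h W \<rho>"
    and sigma: "\<forall>p\<in>F_pairs E \<rho>. \<sigma> p \<in> E \<and> \<rho> (\<sigma> p) = p \<and>
        (\<forall>e\<in>E. \<rho> e = p \<longrightarrow> w e / eta T tw ends w e \<le> w (\<sigma> p) / eta T tw ends w (\<sigma> p))"
    and beta: "\<beta> = 4 * (\<Sum>e\<in>E. eta T tw ends w e) / real t"
    and load: "\<forall>i\<in>{1..h}. card (W i) > 1 \<longrightarrow> (\<Sum>e\<in>{e\<in>E. i \<in> \<rho> e}. eta T tw ends w e) \<le> \<beta>"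
  shows "\<forall>i\<in>{1..h}. card (W i) > 1 \<longrightarrow>
     (\<Sum>p\<in>{p\<in>F_pairs E \<rho>. i \<in> p}.
        max (omega E w \<rho> p / w (\<sigma> p))
            (stretch T tw (fst (ends (\<sigma> p))) (snd (ends (\<sigma> p))) (omega E w \<rho> p)))
     \<le> 2 * \<beta>"
proof (intro ballI impI)
  fix i assume "i \<in> {1..h}" "card (W i) > 1"
  let ?\<eta> = "eta T tw ends w"
    and ?\<phi> = "\<lambda>p. max (omega E w \<rho> p / w (\<sigma> p))
      (stretch T tw (fst (ends (\<sigma> p))) (snd (ends (\<sigma> p))) (omega E w \<rho> p))"
  have \<eta>_nonneg: "\<forall>e\<in>E. ?\<eta> e \<ge> 0"
    using eta_ge_one by (meson order_trans zero_le_one)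
  have load_i: "(\<Sum>e\<in>{e\<in>E. i \<in> \<rho> e}. ?\<eta> e) \<le> \<beta>"
    using load \<open>i \<in> {1..h}\<close> \<open>card (W i) > 1\<close> by blast
  have "(\<Sum>p\<in>{p\<in>F_pairs E \<rho>. i \<in> p}. ?\<phi> p)
      \<le> (\<Sum>p\<in>{p\<in>F_pairs E \<rho>. i \<in> p}. \<Sum>e\<in>{e\<in>E. \<rho> e = p}. ?\<eta> e)"
    using sigma edges by (intro sum_mono contracted_edge_phi_le_class_eta[OF finE]) auto
  also have "\<dots> \<le> (\<Sum>e\<in>{e\<in>E. i \<in> \<rho> e}. ?\<eta> e)"
    using finE finite_F_pairs[OF finE] \<eta>_nonneg by (rule sum_classes_containing_le)
  also have "\<dots> \<le> 2 * \<beta>"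
  proof -
    have "(\<Sum>e\<in>{e\<in>E. i \<in> \<rho> e}. ?\<eta> e) \<ge> 0"
      using \<eta>_nonneg by (intro sum_nonneg) auto
    then show ?thesis using load_i by linarith
  qed
  finally show "(\<Sum>p\<in>{p\<in>F_pairs E \<rho>. i \<in> p}. ?\<phi> p) \<le> 2 * \<beta>" .
qed

end
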